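(* Fix a prior $\mu$ in the relative interior of $\Delta$ and suppose the updating rule respects the Blackwell order for $\mu$ and $\varphi=\varphi^{\mu}$ is continuous on $\Delta$. (a) If there are at least three states ($n\ge3$), then either there is $x^*\in\Delta$ with $\varphi(x)=x^*$ for all $x\in\Delta$, or $\varphi(x)=x$ for all $x\in\Delta$. (b) If there are two states ($n=2$), then the updating rule is occasionally coarse for $\mu$ with $\varphi(0)=a$ and $\varphi(1)=b$, i.e. there exist $0\le a\le b\le 1$ with $\varphi(x)=a$ for $x\in[0,a)$, $\varphi(x)=x$ for $x\in[a,b]$, and $\varphi(x)=b$ for $x\in(b,1]$.
   Context: Let $\Theta$ be a finite set of states, $|\Theta|=n\ge2$, and $\Delta=\Delta(\Theta)$ the simplex of beliefs, viewed as a subset of $\mathbb{R}^{n-1}$ with the Euclidean metric; for $n=2$, $\Theta=\{0,1\}$ and a belief is identified with the probability of state $1$, so $\Delta=[0,1]$. An experiment $\pi:\Theta\to\Delta(S)$ ($S$ finite) with prior $\mu$ induces the Bayesian distribution over posteriors $\rho_B$, a finitely supported distribution on $\Delta$ with mean $\mu$ (every such distribution arises from some experiment). Blackwell order: $\pi\succeq\pi'$ iff $\rho_B'$ is a mean-preserving contraction of $\rho_B$. An updating rule is given, for each prior $\mu$, by a distortion function $\varphi^{\mu}:\Delta\to\Delta$: when the Bayesian posterior is $x$, the decision maker holds belief $\varphi^{\mu}(x)$. For a compact action set $A$, continuous $u:A\times\Theta\to\mathbb{R}$, and consistent choice $a^*:\Delta\to A$ (i.e. $a^*(y)\in\arg\max_{a}\mathbb{E}_y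 u(a,\theta)$ for all $y$), let $W(x)=\mathbb{E}_x u(a^*(\varphi^{\mu}(x)),\theta)$. The rule respects the Blackwell order for $\mu$ if for all such $A,u,a^*$ and all $\pi\succeq\pi'$, $\mathbb{E}_{\rho_B}W\ge\mathbb{E}_{\rho_B'}W$. For $n=2$, occasionally coarse means: there exist $0\le a\le b\le1$ with $\varphi(x)=a$ for $x\in(0,a)$, $\varphi(x)=b$ for $x\in(b,1)$, $\varphi(x)=x$ for $x\in[a,b]$, $\varphi(0)\le a$, $\varphi(1)\ge b$. *)

theory Defs
  imports "HOL-Probability.Probability"
begin

definition beliefs :: "(real^'n::finite) set" where
  "beliefs = {p. (\<forall>i. 0 \<le> p $ i) \<and> (\<Sum>i\<in>UNIV. p $ i) = 1}"

text \<open>An experiment: for each state a signal distribution with finite support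
  (signals are drawn from nat; any finite signal set embeds into nat).\<close>

definition is_experiment :: "('n::finite \<Rightarrow> nat pmf) \<Rightarrow> bool" where
  "is_experiment \<pi> \<longleftrightarrow> (\<forall>\<theta>. finite (set_pmf (\<pi> \<theta>)))"

definition prior_pmf :: "real^'n::finite \<Rightarrow> 'n pmf" where
  "prior_pmf \<mu> = embed_pmf (\<lambda>\<theta>. \<mu> $ \<theta>)"

definition signal_pmf :: "real^'n::finite \<Rightarrow> ('n \<Rightarrow> nat pmf) \<Rightarrow> nat pmf" where
  "signal_pmf \<mu> \<pi> = bind_pmf (prior_pmf \<mu>) \<pi>"

definition posterior :: "real^'n::finite \<Rightarrow> ('n \<Rightarrow> nat pmf) \<Rightarrow> nat \<Rightarrow> real^'n" where
  "posterior \<mu> \<pi> s = (\<chi> \<theta>. \<mu> $ \<theta> * pmf (\<pi> \<theta>) s / pmf (signal_pmf \<mu> \<pi>) s)"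

definition bayes_dist :: "real^'n::finite \<Rightarrow> ('n \<Rightarrow> nat pmf) \<Rightarrow> (real^'n) pmf" where
  "bayes_dist \<mu> \<pi> = map_pmf (posterior \<mu> \<pi>) (signal_pmf \<mu> \<pi>)"

text \<open>\<rho>' is a mean-preserving contraction of \<rho> (i.e. \<rho> is a mean-preserving spread of \<rho>'):
  \<rho> is obtained from \<rho>' by splitting every point y into a distribution with mean y.\<close>

definition mpc :: "('a::euclidean_space) pmf \<Rightarrow> 'a pmf \<Rightarrow> bool" where
  "mpc \<rho>' \<rho> \<longleftrightarrow> (\<exists>K. \<rho> = bind_pmf \<rho>' K \<and>
      (\<forall>y\<in>set_pmf \<rho>'. measure_pmf.expectation (K y) (\<lambda>x. x) = y))"

definition blackwell_geq :: "real^'n::finite \<Rightarrow> ('n \<Rightarrow> nat pmf) \<Rightarrow> ('n \<Rightarrow> nat pmf) \<Rightarrow> bool" where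
  "blackwell_geq \<mu> \<pi> \<pi>' \<longleftrightarrow> mpc (bayes_dist \<mu> \<pi>') (bayes_dist \<mu> \<pi>)"

definition exp_util :: "('a \<Rightarrow> 'n::finite \<Rightarrow> real) \<Rightarrow> real^'n \<Rightarrow> 'a \<Rightarrow> real" where
  "exp_util u y a = (\<Sum>\<theta>\<in>UNIV. y $ \<theta> * u a \<theta>)"

definition decision_problem ::
  "(real^'n::finite) set \<Rightarrow> (real^'n \<Rightarrow> 'n \<Rightarrow> real) \<Rightarrow> (real^'n \<Rightarrow> real^'n) \<Rightarrow> bool" where
  "decision_problem A u astar \<longleftrightarrow> compact A \<and> A \<noteq> {} \<and>
     (\<forall>\<theta>. continuous_on A (\<lambda>a. u a \<theta>)) \<and>
     (\<forall>y\<in>beliefs. astar y \<in> A \<and> (\<forall>a\<in>A. exp_util u y a \<le> exp_util u y (astar y)))"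

definition welfare ::
  "(real^'n::finite \<Rightarrow> real^'n) \<Rightarrow> (real^'n \<Rightarrow> 'n \<Rightarrow> real) \<Rightarrow> (real^'n \<Rightarrow> real^'n)
    \<Rightarrow> real^'n \<Rightarrow> real" where
  "welfare \<phi> u astar x = exp_util u x (astar (\<phi> x))"

definition respects_blackwell :: "real^'n::finite \<Rightarrow> (real^'n \<Rightarrow> real^'n) \<Rightarrow> bool" where
  "respects_blackwell \<mu> \<phi> \<longleftrightarrow>
     (\<forall>A u astar \<pi> \<pi>'. decision_problem A u astar \<and> is_experiment \<pi> \<and> is_experiment \<pi>' \<and>
        blackwell_geq \<mu> \<pi> \<pi>' \<longrightarrow>
        measure_pmf.expectation (bayes_dist \<mu> \<pi>') (welfare \<phi> u astar)
          \<le> measure_pmf.expectation (bayes_dist \<mu> \<pi>) (welfare \<phi> u astar))"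

end

(*
  Respecting the Blackwell order makes the welfare x \<mapsto> E_x u(a*(\<phi> x)) of every decision
  problem convex on the simplex: every finitely supported distribution of posteriors with mean \<mu>
  is induced by some experiment, so splitting a single posterior m into p and q with mean m is a
  Blackwell improvement, and the welfare change it causes is concentrated at m.

  Apply this to the bet on a payoff vector g, taken at belief y iff g has positive expectation
  under y. Suppose the bet is taken at \<phi> x although it loses at x, but refused at some \<phi> w.
  By continuity it is also refused at points m of the segment from w towards x near w; there the
  welfare is 0, whereas convexity bounds it by a negative number. With a separating hyperplane this
  yields the ray condition: if \<phi> x \<noteq> x, then every \<phi> w lies on the ray from x through \<phi> x,
  at or beyond \<phi> x.

  With three or more states some belief y lies off the line through x and \<phi> x. All values of \<phi>
  lie on that line and on the line through y and \<phi> y, which meet only in \<phi> y, so \<phi> is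
  constant. With two states, the ray condition read in one coordinate says that every belief that
  \<phi> moves upwards is sent to a = \<phi>(0) and every belief moved downwards to b = \<phi>(1), so \<phi> is
  the clamp onto [a, b].
*)
theory Submission
  imports Defs
begin

lemma beliefs_nonneg: "y \<in> beliefs \<Longrightarrow> 0 \<le> y $ i"
  by (simp add: beliefs_def)

lemma beliefs_sum: "y \<in> beliefs \<Longrightarrow> (\<Sum>i\<in>UNIV. y $ i) = 1"
  by (simp add: beliefs_def)

lemma beliefs_le_one: "y \<in> beliefs \<Longrightarrow> y $ i \<le> 1"
  using member_le_sum[of i UNIV "\<lambda>i. y $ i"] by (simp add: beliefs_nonneg beliefs_sum)

lemma axis_in_beliefs: "axis i 1 \<in> beliefs"
  by (auto simp: beliefs_def axis_def)

lemma inner_one_beliefs: "y \<in> beliefs \<Longrightarrow> inner 1 y = 1"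
  by (simp add: inner_vec_def beliefs_sum)

lemma convex_beliefs: "convex beliefs"
  unfolding convex_def
proof (intro ballI allI impI)
  fix x y :: "real^'n" and u v :: real
  assume "x \<in> beliefs" "y \<in> beliefs" "0 \<le> u" "0 \<le> v" "u + v = 1"
  then show "u *\<^sub>R x + v *\<^sub>R y \<in> beliefs"
    by (simp add: beliefs_def sum.distrib flip: sum_distrib_left)
qed

lemma rel_interior_convex_decomposition:
  fixes S :: "'a::euclidean_space set"
  assumes "convex S" "\<mu> \<in> rel_interior S" "m \<in> S"
  obtains t z where "0 < t" "t \<le> 1" "z \<in> S" "\<mu> = t *\<^sub>R m + (1 - t) *\<^sub>R z"
proof -
  have "m \<in> affine hull S"
    using assms(3) by (rule hull_inc)
  then obtain e where e: "e > 1" "(1 - e) *\<^sub>R m + e *\<^sub>R \<mu> \<in> S"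
    using convex_rel_interior_if[OF assms(1,2)] by (meson order.refl)
  define z where "z = (1 - e) *\<^sub>R m + e *\<^sub>R \<mu>"
  define t where "t = (e - 1) / e"
  have "(1 - t) *\<^sub>R z = ((1 - e) / e) *\<^sub>R m + \<mu>"
    using e(1) by (simp add: t_def z_def scaleR_add_right diff_divide_distrib)
  have "t + (1 - e) / e = 0"
    by (simp add: t_def diff_divide_distrib)
  then have "t *\<^sub>R m + (1 - t) *\<^sub>R z = \<mu>"
    using \<open>(1 - t) *\<^sub>R z = ((1 - e) / e) *\<^sub>R m + \<mu>\<close> by (simp flip: scaleR_left_distrib)
  moreover have "0 < t" "t \<le> 1"
    using e(1) by (simp_all add: t_def)
  ultimately show thesis
    using that e(2) z_def by (metis (no_types))
qed

lemma rel_interior_beliefs_pos: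
  assumes "\<mu> \<in> rel_interior beliefs"
  shows "0 < \<mu> $ i"
proof -
  obtain t z where tz: "0 < t" "t \<le> 1" "z \<in> beliefs" "\<mu> = t *\<^sub>R axis i 1 + (1 - t) *\<^sub>R z"
    using rel_interior_convex_decomposition[OF convex_beliefs assms axis_in_beliefs] by blast
  have "0 \<le> (1 - t) * z $ i"
    using tz(2,3) by (simp add: beliefs_nonneg)
  then show ?thesis
    using tz(1,4) by (simp add: axis_def)
qed

section \<open>Bayes-plausible distributions and experiments\<close>

definition two_point_pmf :: "real \<Rightarrow> 'a \<Rightarrow> 'a \<Rightarrow> 'a pmf" where
  "two_point_pmf t x y = map_pmf (\<lambda>b. if b then x else y) (bernoulli_pmf t)"

lemma set_two_point_pmf: "set_pmf (two_point_pmf t x y) \<subseteq> {x, y}"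
  by (auto simp: two_point_pmf_def)

lemma in_set_two_point_pmf:
  assumes "0 < t" "t \<le> 1"
  shows "x \<in> set_pmf (two_point_pmf t x y)"
proof -
  have "True \<in> set_pmf (bernoulli_pmf t)"
    using assms by (simp add: set_pmf_iff)
  then show ?thesis
    unfolding two_point_pmf_def by (auto intro: rev_image_eqI)
qed

lemma expectation_two_point_pmf:
  fixes f :: "'a \<Rightarrow> 'b::{banach, second_countable_topology}"
  assumes "0 \<le> t" "t \<le> 1"
  shows "measure_pmf.expectation (two_point_pmf t x y) f = t *\<^sub>R f x + (1 - t) *\<^sub>R f y"
  unfolding two_point_pmf_def integral_map_pmf
  by (subst integral_measure_pmf[of UNIV]) (auto simp: UNIV_bool assms)

lemma expectation_bind_pmf_finite:
  fixes f :: "'b \<Rightarrow> 'c::{banach, second_countable_topology}"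
  assumes M: "finite (set_pmf M)" and N: "\<And>x. x \<in> set_pmf M \<Longrightarrow> finite (set_pmf (N x))"
  shows "measure_pmf.expectation (bind_pmf M N) f =
           measure_pmf.expectation M (\<lambda>x. measure_pmf.expectation (N x) f)"
proof -
  define B where "B = set_pmf (bind_pmf M N)"
  have B: "finite B" "\<And>x. x \<in> set_pmf M \<Longrightarrow> set_pmf (N x) \<subseteq> B"
    using M N by (auto simp: B_def)
  have pmf_bind_sum: "pmf (bind_pmf M N) b = (\<Sum>x\<in>set_pmf M. pmf M x * pmf (N x) b)" for b
    unfolding pmf_bind by (subst integral_measure_pmf[OF M]) auto
  have "measure_pmf.expectation (bind_pmf M N) f = (\<Sum>b\<in>B. pmf (bind_pmf M N) b *\<^sub>R f b)"
    by (rule integral_measure_pmf[OF B(1)]) (simp add: B_def set_pmf_iff)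
  also have "\<dots> = (\<Sum>b\<in>B. \<Sum>x\<in>set_pmf M. pmf M x *\<^sub>R (pmf (N x) b *\<^sub>R f b))"
    by (simp add: pmf_bind_sum scaleR_sum_left)
  also have "\<dots> = (\<Sum>x\<in>set_pmf M. pmf M x *\<^sub>R (\<Sum>b\<in>B. pmf (N x) b *\<^sub>R f b))"
    by (simp add: sum.swap[of _ B] scaleR_sum_right)
  also have "\<dots> = (\<Sum>x\<in>set_pmf M. pmf M x *\<^sub>R measure_pmf.expectation (N x) f)"
    using B by (intro sum.cong refl) (auto simp: set_pmf_iff intro!: integral_measure_pmf[symmetric])
  also have "\<dots> = measure_pmf.expectation M (\<lambda>x. measure_pmf.expectation (N x) f)"
    by (rule integral_measure_pmf[OF M, symmetric]) (simp add: set_pmf_iff)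
  finally show ?thesis .
qed

lemma expectation_fun_upd_finite:
  fixes f :: "'a \<Rightarrow> real"
  assumes "finite (set_pmf \<rho>)"
  shows "measure_pmf.expectation \<rho> (f(m := c)) = measure_pmf.expectation \<rho> f + pmf \<rho> m * (c - f m)"
proof -
  have int: "integrable \<rho> g" for g :: "'a \<Rightarrow> real"
    using assms by (rule integrable_measure_pmf_finite)
  have "measure_pmf.expectation \<rho> (f(m := c))
      = measure_pmf.expectation \<rho> (\<lambda>x. f x + (if x = m then c - f m else 0))"
    by (rule Bochner_Integration.integral_cong) auto
  also have "\<dots> = measure_pmf.expectation \<rho> f + measure_pmf.expectation \<rho> (\<lambda>x. if x = m then c - f m else 0)"
    by (rule Bochner_Integration.integral_add[OF int int])
  also have "measure_pmf.expectation \<rho> (\<lambda>x. if x = m then c - f m else 0) = pmf \<rho> m * (c - f m)"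
    by (subst integral_measure_pmf[of "{m}"]) (auto split: if_splits)
  finally show ?thesis .
qed

definition bayes_plausible :: "real^'n::finite \<Rightarrow> (real^'n) pmf \<Rightarrow> bool" where
  "bayes_plausible \<mu> \<rho> \<longleftrightarrow> finite (set_pmf \<rho>) \<and> set_pmf \<rho> \<subseteq> beliefs \<and>
     measure_pmf.expectation \<rho> (\<lambda>x. x) = \<mu>"

lemma bayes_plausible_return_pmf: "y \<in> beliefs \<Longrightarrow> bayes_plausible y (return_pmf y)"
  by (simp add: bayes_plausible_def integral_measure_pmf[of "{y}"])

lemma bayes_plausible_two_point_pmf:
  assumes "p \<in> beliefs" "q \<in> beliefs" "0 \<le> t" "t \<le> 1"
  shows "bayes_plausible (t *\<^sub>R p + (1 - t) *\<^sub>R q) (two_point_pmf t p q)"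
  using assms set_two_point_pmf[of t p q]
  by (auto simp: bayes_plausible_def expectation_two_point_pmf intro: finite_subset)

lemma bayes_plausible_containing:
  assumes "\<mu> \<in> rel_interior beliefs" "m \<in> beliefs"
  obtains \<rho> where "bayes_plausible \<mu> \<rho>" "m \<in> set_pmf \<rho>"
proof -
  obtain t z where "0 < t" "t \<le> 1" "z \<in> beliefs" "\<mu> = t *\<^sub>R m + (1 - t) *\<^sub>R z"
    using rel_interior_convex_decomposition[OF convex_beliefs assms] by blast
  then show thesis
    using that bayes_plausible_two_point_pmf in_set_two_point_pmf assms(2) by (metis less_imp_le)
qed

lemma pmf_prior_pmf:
  assumes "\<mu> \<in> beliefs"
  shows "pmf (prior_pmf \<mu>) \<theta> = \<mu> $ \<theta>"
  unfolding prior_pmf_def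
proof (rule pmf_embed_pmf)
  show "0 \<le> \<mu> $ \<theta>" for \<theta>
    using assms by (rule beliefs_nonneg)
  have "(\<integral>\<^sup>+ \<theta>. ennreal (\<mu> $ \<theta>) \<partial>count_space UNIV) = ennreal (\<Sum>\<theta>\<in>UNIV. \<mu> $ \<theta>)"
    using assms by (simp add: nn_integral_count_space_finite beliefs_nonneg)
  then show "(\<integral>\<^sup>+ \<theta>. ennreal (\<mu> $ \<theta>) \<partial>count_space UNIV) = 1"
    using assms by (simp add: beliefs_sum)
qed

(* Bayes' rule solved for the likelihood of signal s in state \<theta>. *)
definition signal_experiment :: "real^'n::finite \<Rightarrow> nat pmf \<Rightarrow> (nat \<Rightarrow> real^'n) \<Rightarrow> 'n \<Rightarrow> nat pmf" where
  "signal_experiment \<mu> \<sigma> y \<theta> = embed_pmf (\<lambda>s. pmf \<sigma> s * y s $ \<theta> / \<mu> $ \<theta>)"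

context
  fixes \<mu> :: "real^'n::finite" and \<sigma> :: "nat pmf" and y :: "nat \<Rightarrow> real^'n"
  assumes \<mu>_beliefs: "\<mu> \<in> beliefs" and \<mu>_pos: "\<And>\<theta>. 0 < \<mu> $ \<theta>"
    and fin: "finite (set_pmf \<sigma>)" and y_beliefs: "\<And>s. y s \<in> beliefs"
    and mean: "measure_pmf.expectation \<sigma> y = \<mu>"
begin

lemma pmf_signal_experiment: "pmf (signal_experiment \<mu> \<sigma> y \<theta>) s = pmf \<sigma> s * y s $ \<theta> / \<mu> $ \<theta>"
  unfolding signal_experiment_def
proof (rule pmf_embed_pmf)
  have nonneg: "0 \<le> pmf \<sigma> s * y s $ \<theta> / \<mu> $ \<theta>" for s
    using y_beliefs \<mu>_pos by (simp add: beliefs_nonneg less_imp_le)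
  then show "0 \<le> pmf \<sigma> s * y s $ \<theta> / \<mu> $ \<theta>" for s .
  have "\<mu> $ \<theta> = (\<Sum>s\<in>set_pmf \<sigma>. pmf \<sigma> s *\<^sub>R y s) $ \<theta>"
    using mean integral_measure_pmf[OF fin, where f = y and M = \<sigma>] by (simp add: set_pmf_iff)
  then have "(\<Sum>s\<in>set_pmf \<sigma>. pmf \<sigma> s * y s $ \<theta>) / \<mu> $ \<theta> = 1"
    using \<mu>_pos[of \<theta>] by (simp add: sum_component)
  moreover have "(\<integral>\<^sup>+s. ennreal (pmf \<sigma> s * y s $ \<theta> / \<mu> $ \<theta>) \<partial>count_space UNIV)
      = (\<Sum>s\<in>set_pmf \<sigma>. ennreal (pmf \<sigma> s * y s $ \<theta> / \<mu> $ \<theta>))"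
    by (rule nn_integral_count_space') (auto simp: fin set_pmf_iff)
  ultimately show "(\<integral>\<^sup>+s. ennreal (pmf \<sigma> s * y s $ \<theta> / \<mu> $ \<theta>) \<partial>count_space UNIV) = 1"
    using nonneg by (simp add: sum_ennreal sum_divide_distrib)
qed

lemma signal_pmf_signal_experiment: "signal_pmf \<mu> (signal_experiment \<mu> \<sigma> y) = \<sigma>"
proof (rule pmf_eqI)
  fix s
  have "pmf (signal_pmf \<mu> (signal_experiment \<mu> \<sigma> y)) s
      = (\<Sum>\<theta>\<in>UNIV. \<mu> $ \<theta> * pmf (signal_experiment \<mu> \<sigma> y \<theta>) s)"
    unfolding signal_pmf_def pmf_bind
    by (subst integral_measure_pmf[of UNIV]) (auto simp: pmf_prior_pmf[OF \<mu>_beliefs])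
  also have "\<dots> = pmf \<sigma> s * (\<Sum>\<theta>\<in>UNIV. y s $ \<theta>)"
    using \<mu>_pos by (simp add: pmf_signal_experiment sum_distrib_left less_imp_neq[symmetric])
  also have "\<dots> = pmf \<sigma> s"
    using y_beliefs by (simp add: beliefs_sum)
  finally show "pmf (signal_pmf \<mu> (signal_experiment \<mu> \<sigma> y)) s = pmf \<sigma> s" .
qed

lemma bayes_dist_signal_experiment: "bayes_dist \<mu> (signal_experiment \<mu> \<sigma> y) = map_pmf y \<sigma>"
  unfolding bayes_dist_def signal_pmf_signal_experiment using \<mu>_pos
  by (intro map_pmf_cong refl)
    (auto simp: posterior_def pmf_signal_experiment signal_pmf_signal_experiment vec_eq_iff
       set_pmf_iff less_imp_neq[symmetric])

lemma is_experiment_signal_experiment: "is_experiment (signal_experiment \<mu> \<sigma> y)"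
  unfolding is_experiment_def
  using fin by (auto simp: set_pmf_iff pmf_signal_experiment intro: finite_subset[of _ "set_pmf \<sigma>"])

end

lemma bayes_plausible_imp_bayes_dist:
  assumes \<mu>: "\<mu> \<in> rel_interior beliefs" and \<rho>: "bayes_plausible \<mu> \<rho>"
  obtains \<pi> where "is_experiment \<pi>" "bayes_dist \<mu> \<pi> = \<rho>"
proof -
  let ?S = "set_pmf \<rho>"
  define \<sigma> where "\<sigma> = map_pmf (to_nat_on ?S) \<rho>"
  define y where "y = from_nat_into ?S"
  have fin: "finite ?S"
    using \<rho> by (simp add: bayes_plausible_def)
  have y_\<sigma>: "map_pmf y \<sigma> = \<rho>"
    unfolding \<sigma>_def y_def pmf.map_comp using fin by (intro map_pmf_idI) (simp add: countable_finite)
  have "y s \<in> beliefs" for s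
    using from_nat_into[OF set_pmf_not_empty] \<rho> by (auto simp: y_def bayes_plausible_def)
  moreover have "measure_pmf.expectation \<sigma> y = \<mu>"
    using \<rho> by (simp add: bayes_plausible_def flip: y_\<sigma>)
  moreover have "finite (set_pmf \<sigma>)"
    using fin by (simp add: \<sigma>_def)
  moreover have "\<mu> \<in> beliefs" "\<And>\<theta>. 0 < \<mu> $ \<theta>"
    using \<mu> rel_interior_subset rel_interior_beliefs_pos by blast+
  ultimately show thesis
    using that is_experiment_signal_experiment bayes_dist_signal_experiment y_\<sigma> by metis
qed

section \<open>Convexity of welfare\<close>

lemma respects_blackwell_split:
  assumes rb: "respects_blackwell \<mu> \<phi>" and \<mu>: "\<mu> \<in> rel_interior beliefs"
    and dp: "decision_problem A u astar"
    and \<rho>: "bayes_plausible \<mu> \<rho>" and K_plausible: "\<And>y. y \<in> set_pmf \<rho> \<Longrightarrow> bayes_plausible y (K y)"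
  shows "measure_pmf.expectation \<rho> (welfare \<phi> u astar)
           \<le> measure_pmf.expectation \<rho> (\<lambda>y. measure_pmf.expectation (K y) (welfare \<phi> u astar))"
proof -
  have fin: "finite (set_pmf \<rho>)" "\<And>y. y \<in> set_pmf \<rho> \<Longrightarrow> finite (set_pmf (K y))"
    using \<rho> K_plausible by (simp_all add: bayes_plausible_def)
  have "measure_pmf.expectation (bind_pmf \<rho> K) (\<lambda>x. x)
      = measure_pmf.expectation \<rho> (\<lambda>y. measure_pmf.expectation (K y) (\<lambda>x. x))"
    by (rule expectation_bind_pmf_finite[OF fin])
  also have "\<dots> = measure_pmf.expectation \<rho> (\<lambda>y. y)"
    using K_plausible by (intro integral_cong_AE) (simp_all add: AE_measure_pmf_iff bayes_plausible_def)
  finally have "bayes_plausible \<mu> (bind_pmf \<rho> K)"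
    using \<rho> K_plausible by (auto simp: bayes_plausible_def)
  then obtain \<pi> where \<pi>: "is_experiment \<pi>" "bayes_dist \<mu> \<pi> = bind_pmf \<rho> K"
    by (rule bayes_plausible_imp_bayes_dist[OF \<mu>])
  obtain \<pi>' where \<pi>': "is_experiment \<pi>'" "bayes_dist \<mu> \<pi>' = \<rho>"
    using \<rho> by (rule bayes_plausible_imp_bayes_dist[OF \<mu>])
  have "blackwell_geq \<mu> \<pi> \<pi>'"
    unfolding blackwell_geq_def mpc_def \<pi>(2) \<pi>'(2) using K_plausible by (auto simp: bayes_plausible_def)
  then have "measure_pmf.expectation \<rho> (welfare \<phi> u astar)
               \<le> measure_pmf.expectation (bind_pmf \<rho> K) (welfare \<phi> u astar)"
    using rb dp \<pi> \<pi>' unfolding respects_blackwell_def by metis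
  also have "\<dots> = measure_pmf.expectation \<rho> (\<lambda>y. measure_pmf.expectation (K y) (welfare \<phi> u astar))"
    by (rule expectation_bind_pmf_finite[OF fin])
  finally show ?thesis .
qed

lemma convex_on_welfare:
  assumes rb: "respects_blackwell \<mu> \<phi>" and \<mu>: "\<mu> \<in> rel_interior beliefs"
    and dp: "decision_problem A u astar"
  shows "convex_on beliefs (welfare \<phi> u astar)"
  unfolding convex_on_def
proof (intro conjI convex_beliefs ballI allI impI)
  let ?W = "welfare \<phi> u astar"
  fix p q :: "real^'a" and l v :: real
  assume p: "p \<in> beliefs" and q: "q \<in> beliefs" and l: "0 \<le> l" "0 \<le> v" "l + v = 1"
  then have v: "v = 1 - l" "l \<le> 1"
    by simp_all
  define m where "m = l *\<^sub>R p + (1 - l) *\<^sub>R q"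
  define c where "c = l * ?W p + (1 - l) * ?W q"
  have m: "m \<in> beliefs"
    using convex_beliefs p q l v unfolding m_def convex_def by auto
  obtain \<rho> where \<rho>: "bayes_plausible \<mu> \<rho>" "m \<in> set_pmf \<rho>"
    using \<mu> m by (rule bayes_plausible_containing)
  define K where "K y = (if y = m then two_point_pmf l p q else return_pmf y)" for y
  have K_plausible: "bayes_plausible y (K y)" if "y \<in> set_pmf \<rho>" for y
  proof (cases "y = m")
    case True
    then show ?thesis
      using bayes_plausible_two_point_pmf[OF p q l(1) v(2)] by (simp add: K_def m_def)
  next
    case False
    then show ?thesis
      using that \<rho>(1) by (auto simp: K_def bayes_plausible_def intro: bayes_plausible_return_pmf)
  qed
  have "(\<lambda>y. measure_pmf.expectation (K y) ?W) = ?W(m := c)"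
    using l v by (simp add: fun_eq_iff K_def c_def expectation_two_point_pmf)
  then have "measure_pmf.expectation \<rho> ?W \<le> measure_pmf.expectation \<rho> (?W(m := c))"
    using respects_blackwell_split[OF rb \<mu> dp \<rho>(1), of K] K_plausible by simp
  then have "0 \<le> pmf \<rho> m * (c - ?W m)"
    using \<rho>(1) by (simp add: expectation_fun_upd_finite bayes_plausible_def)
  then have "?W m \<le> c"
    using \<rho>(2) by (simp add: set_pmf_iff zero_le_mult_iff pmf_nonneg less_le)
  then show "?W (l *\<^sub>R p + v *\<^sub>R q) \<le> l * ?W p + v * ?W q"
    by (simp add: m_def c_def v)
qed

section \<open>Bets and the ray condition\<close>

definition bet_on :: "real^'n::finite \<Rightarrow> real^'n \<Rightarrow> real^'n" where
  "bet_on g y = (if 0 < inner g y then g else 0)"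

lemma exp_util_vec_nth: "exp_util (\<lambda>a \<theta>. a $ \<theta>) y a = inner y a"
  by (simp add: exp_util_def inner_vec_def)

lemma decision_problem_bet_on: "decision_problem {0, g} (\<lambda>a \<theta>. a $ \<theta>) (bet_on g)"
  unfolding decision_problem_def exp_util_vec_nth bet_on_def
  by (auto intro: continuous_intros finite_imp_compact simp: inner_commute)

lemma welfare_bet_on:
  "welfare \<phi> (\<lambda>a \<theta>. a $ \<theta>) (bet_on g) x = (if 0 < inner g (\<phi> x) then inner g x else 0)"
  by (simp add: welfare_def exp_util_vec_nth bet_on_def inner_commute)

lemma unprofitable_bet_taken_everywhere:
  assumes convex: "convex_on beliefs (welfare \<phi> (\<lambda>a \<theta>. a $ \<theta>) (bet_on g))"
    and cont: "continuous_on beliefs \<phi>" and x: "x \<in> beliefs" and w: "w \<in> beliefs"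
    and loss: "inner g x < 0" and taken: "0 < inner g (\<phi> x)"
  shows "0 \<le> inner g (\<phi> w)"
proof (rule ccontr)
  let ?W = "welfare \<phi> (\<lambda>a \<theta>. a $ \<theta>) (bet_on g)"
  assume "\<not> 0 \<le> inner g (\<phi> w)"
  define \<gamma> where "\<gamma> l = l *\<^sub>R x + (1 - l) *\<^sub>R w" for l :: real
  have \<gamma>: "\<gamma> ` {0..1} \<subseteq> beliefs"
    using convex_beliefs x w by (auto simp: \<gamma>_def convex_def)
  have "continuous_on {0..1} (\<lambda>l. inner g (\<phi> (\<gamma> l)))"
    by (rule continuous_on_compose2[OF _ _ \<gamma>]) (auto simp: \<gamma>_def intro!: continuous_intros cont)
  then have "((\<lambda>l. inner g (\<phi> (\<gamma> l))) \<longlongrightarrow> inner g (\<phi> w)) (at_right 0)"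
    by (auto simp: continuous_on_def at_within_Icc_at_right \<gamma>_def dest!: bspec[of _ _ 0])
  then have "\<forall>\<^sub>F l in at_right 0. inner g (\<phi> (\<gamma> l)) < 0"
    using \<open>\<not> 0 \<le> inner g (\<phi> w)\<close> by (auto intro: order_tendstoD)
  moreover have "\<forall>\<^sub>F l in at_right 0. l < (1::real)"
    by (rule order_tendstoD(2)[OF tendsto_ident_at]) simp
  moreover note eventually_at_right_less[of "0::real"]
  ultimately have "\<forall>\<^sub>F l in at_right 0. 0 < l \<and> l < 1 \<and> inner g (\<phi> (\<gamma> l)) < 0"
    by eventually_elim simp
  then obtain l where l: "0 < l" "l < 1" "inner g (\<phi> (\<gamma> l)) < 0"
    using eventually_happens'[OF trivial_limit_at_right_real] by blast
  have "?W (\<gamma> l) \<le> l * ?W x + (1 - l) * ?W w"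
    using convex x w l unfolding convex_on_def \<gamma>_def by simp
  then have "0 \<le> l * inner g x"
    using l taken \<open>\<not> 0 \<le> inner g (\<phi> w)\<close> by (simp add: welfare_bet_on)
  moreover have "l * inner g x < 0"
    using l loss by (simp add: mult_pos_neg)
  ultimately show False
    by simp
qed

definition distorts_along_rays :: "(real^'n::finite \<Rightarrow> real^'n) \<Rightarrow> bool" where
  "distorts_along_rays \<phi> \<longleftrightarrow>
     (\<forall>x\<in>beliefs. \<phi> x \<noteq> x \<longrightarrow> (\<forall>w\<in>beliefs. \<exists>t\<ge>1. \<phi> w = x + t *\<^sub>R (\<phi> x - x)))"

lemma ray_separation:
  fixes a b :: "'a::real_inner"
  assumes a: "a \<noteq> 0" and b: "\<forall>t\<ge>1. b \<noteq> t *\<^sub>R a"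
  obtains g where "0 < inner g a" "inner g b < inner g a"
proof -
  define k where "k = inner b a / inner a a"
  define h where "h = b - k *\<^sub>R a"
  have aa: "0 < inner a a"
    using a by simp
  have ha: "inner h a = 0" "inner a h = 0"
    using aa by (simp_all add: h_def k_def inner_diff_left inner_diff_right inner_commute)
  have b_decomp: "b = k *\<^sub>R a + h"
    by (simp add: h_def)
  show thesis
  proof (cases "h = 0")
    case True
    then have "b = k *\<^sub>R a"
      by (simp add: b_decomp)
    then have "\<not> 1 \<le> k"
      using b by blast
    then have "k < 1"
      by simp
    then show thesis
      using that[of a] aa \<open>b = k *\<^sub>R a\<close> by simp
  next
    case False
    define g where "g = a - (\<bar>k\<bar> * inner a a / inner h h) *\<^sub>R h"
    have "inner g a = inner a a"
      using ha by (simp add: g_def inner_diff_left)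
    moreover have "inner g b = k * inner a a - (\<bar>k\<bar> * inner a a / inner h h) * inner h h"
      using ha by (simp add: g_def b_decomp inner_diff_left inner_add_right)
    then have "inner g b = (k - \<bar>k\<bar>) * inner a a"
      using False by (simp add: left_diff_distrib)
    moreover have "(k - \<bar>k\<bar>) * inner a a \<le> 0"
      using aa by (simp add: mult_nonpos_nonneg)
    ultimately show thesis
      using that[of g] aa by linarith
  qed
qed

lemma distorts_along_rays_if_convex_bet_welfare:
  fixes \<phi> :: "real^'n::finite \<Rightarrow> real^'n"
  assumes bets: "\<And>g. convex_on beliefs (welfare \<phi> (\<lambda>a \<theta>. a $ \<theta>) (bet_on g))"
    and cont: "continuous_on beliefs \<phi>" and maps: "\<forall>x\<in>beliefs. \<phi> x \<in> beliefs"
  shows "distorts_along_rays \<phi>"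
  unfolding distorts_along_rays_def
proof (intro ballI impI)
  fix x w :: "real^'n" assume x: "x \<in> beliefs" and moved: "\<phi> x \<noteq> x" and w: "w \<in> beliefs"
  show "\<exists>t\<ge>1. \<phi> w = x + t *\<^sub>R (\<phi> x - x)"
  proof (rule ccontr)
    assume "\<not> ?thesis"
    then have not_on_ray: "\<forall>t\<ge>1. \<phi> w - x \<noteq> t *\<^sub>R (\<phi> x - x)"
      by (auto simp: diff_eq_eq add.commute)
    have "\<phi> x - x \<noteq> 0"
      using moved by simp
    then obtain h where h: "0 < inner h (\<phi> x - x)" "inner h (\<phi> w - x) < inner h (\<phi> x - x)"
      using not_on_ray by (rule ray_separation)
    define k where "k = (max (inner h x) (inner h (\<phi> w)) + inner h (\<phi> x)) / 2"
    define g where "g = h - k *\<^sub>R 1"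
    have g: "inner g y = inner h y - k" if "y \<in> beliefs" for y
      using that by (simp add: g_def inner_diff_left inner_one_beliefs)
    have "inner g x < 0" "0 < inner g (\<phi> x)" "inner g (\<phi> w) < 0"
      using h x w maps by (auto simp: g k_def inner_diff_right)
    then show False
      using unprofitable_bet_taken_everywhere[OF bets cont x w] by force
  qed
qed

section \<open>Consequences of the ray condition\<close>

lemma on_line_if_affine_combination:
  fixes x0 a p q y :: "'a::real_vector"
  assumes "p = y + r *\<^sub>R (q - y)" "r \<noteq> 1"
    and "p \<in> range (\<lambda>s. x0 + s *\<^sub>R a)" "q \<in> range (\<lambda>s. x0 + s *\<^sub>R a)"
  shows "y \<in> range (\<lambda>s. x0 + s *\<^sub>R a)"
proof -
  obtain s s' where p: "p = x0 + s *\<^sub>R a" and q: "q = x0 + s' *\<^sub>R a"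
    using assms(3,4) by blast
  have "(1 - r) *\<^sub>R y = p - r *\<^sub>R q"
    using assms(1) by (simp add: algebra_simps)
  also have "\<dots> = (1 - r) *\<^sub>R x0 + (s - r * s') *\<^sub>R a"
    by (simp add: p q algebra_simps)
  also have "\<dots> = (1 - r) *\<^sub>R (x0 + ((s - r * s') / (1 - r)) *\<^sub>R a)"
    using assms(2) by (simp add: scaleR_add_right)
  finally have "y = x0 + ((s - r * s') / (1 - r)) *\<^sub>R a"
    using assms(2) by simp
  then show ?thesis
    by blast
qed

lemma beliefs_not_on_line:
  assumes "CARD('n::finite) \<ge> 3"
  obtains y :: "real^'n" where "y \<in> beliefs" "y \<notin> range (\<lambda>s. x0 + s *\<^sub>R a)"
proof -
  have "\<not> beliefs \<subseteq> range (\<lambda>s. x0 + s *\<^sub>R a)"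
  proof
    assume on_line: "beliefs \<subseteq> range (\<lambda>s. x0 + s *\<^sub>R a)"
    obtain T :: "'n set" where "card T = 3"
      using obtain_subset_with_card_n[OF assms] by metis
    then obtain i j k :: 'n where ijk: "i \<noteq> j" "j \<noteq> k" "i \<noteq> k"
      unfolding card_3_iff by blast
    have "\<exists>s. axis l 1 = x0 + s *\<^sub>R a" for l
      using on_line axis_in_beliefs[of l] by blast
    then obtain si sj sk where "axis i 1 = x0 + si *\<^sub>R a" "axis j 1 = x0 + sj *\<^sub>R a"
      "axis k 1 = x0 + sk *\<^sub>R a"
      by metis
    then have ji: "axis j 1 - axis i 1 = (sj - si) *\<^sub>R a" and ki: "axis k 1 - axis i 1 = (sk - si) *\<^sub>R a"
      by (simp_all add: algebra_simps)
    have coord: "0 = (sj - si) * a $ k" "1 = (sj - si) * a $ j" "1 = (sk - si) * a $ k"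
      using arg_cong[OF ji, of "\<lambda>v. v $ k"] arg_cong[OF ji, of "\<lambda>v. v $ j"]
        arg_cong[OF ki, of "\<lambda>v. v $ k"] ijk
      by (simp_all add: axis_def)
    have "a $ k \<noteq> 0"
      using coord(3) by auto
    then have "sj = si"
      using coord(1) by simp
    then show False
      using coord(2) by simp
  qed
  then show thesis
    using that by blast
qed

lemma distorts_along_rays_constant_or_id:
  fixes \<phi> :: "real^'n::finite \<Rightarrow> real^'n"
  assumes "CARD('n) \<ge> 3" and maps: "\<forall>x\<in>beliefs. \<phi> x \<in> beliefs" and ray: "distorts_along_rays \<phi>"
  shows "(\<exists>c\<in>beliefs. \<forall>x\<in>beliefs. \<phi> x = c) \<or> (\<forall>x\<in>beliefs. \<phi> x = x)"
proof (rule disjCI)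
  assume "\<not> (\<forall>x\<in>beliefs. \<phi> x = x)"
  then obtain x0 where x0: "x0 \<in> beliefs" "\<phi> x0 \<noteq> x0"
    by blast
  let ?L = "range (\<lambda>s. x0 + s *\<^sub>R (\<phi> x0 - x0))"
  have on_L: "\<phi> w \<in> ?L" if "w \<in> beliefs" for w
    using ray x0 that unfolding distorts_along_rays_def by blast
  obtain y where y: "y \<in> beliefs" "y \<notin> ?L"
    using beliefs_not_on_line[OF assms(1)] by blast
  then have "\<phi> y \<noteq> y"
    using on_L by metis
  have "\<phi> w = \<phi> y" if w: "w \<in> beliefs" for w
  proof -
    obtain r where "r \<ge> 1" and r: "\<phi> w = y + r *\<^sub>R (\<phi> y - y)"
      using ray y(1) \<open>\<phi> y \<noteq> y\<close> w unfolding distorts_along_rays_def by blast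
    have "r = 1"
      using on_line_if_affine_combination[OF r _ on_L[OF w] on_L[OF y(1)]] y(2) by blast
    then show ?thesis
      using r by simp
  qed
  then show "\<exists>c\<in>beliefs. \<forall>x\<in>beliefs. \<phi> x = c"
    using maps y(1) by blast
qed

lemma distorts_along_rays_coordinate_mono:
  assumes ray: "distorts_along_rays \<phi>" and x: "x \<in> beliefs" and w: "w \<in> beliefs"
  shows "x $ s < \<phi> x $ s \<Longrightarrow> \<phi> x $ s \<le> \<phi> w $ s"
    and "\<phi> x $ s < x $ s \<Longrightarrow> \<phi> w $ s \<le> \<phi> x $ s"
proof -
  assume "x $ s < \<phi> x $ s"
  then obtain t where "t \<ge> 1" "\<phi> w = x + t *\<^sub>R (\<phi> x - x)"
    using ray x w unfolding distorts_along_rays_def by force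
  then have "\<phi> x $ s - x $ s \<le> t * (\<phi> x $ s - x $ s)"
    using \<open>x $ s < \<phi> x $ s\<close> by (simp add: mult_le_cancel_right1)
  then show "\<phi> x $ s \<le> \<phi> w $ s"
    using \<open>\<phi> w = x + t *\<^sub>R (\<phi> x - x)\<close> by (simp add: right_diff_distrib)
next
  assume "\<phi> x $ s < x $ s"
  then obtain t where "t \<ge> 1" "\<phi> w = x + t *\<^sub>R (\<phi> x - x)"
    using ray x w unfolding distorts_along_rays_def by force
  then have "t * (\<phi> x $ s - x $ s) \<le> \<phi> x $ s - x $ s"
    using \<open>\<phi> x $ s < x $ s\<close> by (simp add: mult_le_cancel_right2)
  then show "\<phi> w $ s \<le> \<phi> x $ s"
    using \<open>\<phi> w = x + t *\<^sub>R (\<phi> x - x)\<close> by (simp add: right_diff_distrib)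
qed

lemma distorts_along_rays_coordinate_below:
  assumes ray: "distorts_along_rays \<phi>" and v: "v \<in> beliefs" and x: "x \<in> beliefs"
    and "v $ s \<le> x $ s" "x $ s < \<phi> v $ s"
  shows "\<phi> x $ s = \<phi> v $ s"
proof -
  have "\<phi> v $ s \<le> \<phi> x $ s"
    using assms(4,5) by (intro distorts_along_rays_coordinate_mono(1)[OF ray v x]) linarith
  moreover from this have "\<phi> x $ s \<le> \<phi> v $ s"
    using assms(5) by (intro distorts_along_rays_coordinate_mono(1)[OF ray x v]) linarith
  ultimately show ?thesis
    by linarith
qed

lemma distorts_along_rays_coordinate_above:
  assumes ray: "distorts_along_rays \<phi>" and v: "v \<in> beliefs" and x: "x \<in> beliefs"
    and "x $ s \<le> v $ s" "\<phi> v $ s < x $ s"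
  shows "\<phi> x $ s = \<phi> v $ s"
proof -
  have "\<phi> x $ s \<le> \<phi> v $ s"
    using assms(4,5) by (intro distorts_along_rays_coordinate_mono(2)[OF ray v x]) linarith
  moreover from this have "\<phi> v $ s \<le> \<phi> x $ s"
    using assms(5) by (intro distorts_along_rays_coordinate_mono(2)[OF ray x v]) linarith
  ultimately show ?thesis
    by linarith
qed

lemma distorts_along_rays_coordinate_between:
  assumes ray: "distorts_along_rays \<phi>" and v0: "v0 \<in> beliefs" and v1: "v1 \<in> beliefs"
    and x: "x \<in> beliefs" and between: "\<phi> v0 $ s \<le> x $ s" "x $ s \<le> \<phi> v1 $ s"
  shows "\<phi> x $ s = x $ s"
proof (rule ccontr)
  assume "\<phi> x $ s \<noteq> x $ s"
  then consider "x $ s < \<phi> x $ s" | "\<phi> x $ s < x $ s"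
    by linarith
  then show False
  proof cases
    case 1
    then show False
      using distorts_along_rays_coordinate_mono(1)[OF ray x v0 1] between(1) by linarith
  next
    case 2
    then show False
      using distorts_along_rays_coordinate_mono(2)[OF ray x v1 2] between(2) by linarith
  qed
qed

lemma UNIV_two_states:
  fixes s :: "'n::finite"
  assumes "CARD('n) = 2"
  obtains s' where "s' \<noteq> s" "UNIV = {s, s'}"
proof -
  have "card (UNIV - {s}) = 1"
    using assms by simp
  then obtain s' where "UNIV - {s} = {s'}"
    by (rule card_1_singletonE)
  then show thesis
    using that[of s'] by blast
qed

lemma beliefs_eq_two_states:
  assumes "CARD('n::finite) = 2" and x: "x \<in> beliefs" and y: "y \<in> beliefs"
    and "x $ s = (y :: real^'n) $ s"
  shows "x = y"
proof -
  obtain s' where s': "s' \<noteq> s" "UNIV = {s, s'}"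
    using assms(1) by (rule UNIV_two_states)
  have "z $ s + z $ s' = 1" if "z \<in> beliefs" for z :: "real^'n"
  proof -
    have "(\<Sum>i\<in>UNIV. z $ i) = z $ s + z $ s'"
      unfolding s'(2) using s'(1) by simp
    then show ?thesis
      using beliefs_sum[OF that] by simp
  qed
  then have "x $ s' = y $ s'"
    using x y assms(4) by (metis add_left_cancel)
  then show ?thesis
    using assms(4) s'(2) by (auto simp: vec_eq_iff)
qed

lemma distorts_along_rays_two_states:
  fixes \<phi> :: "real^'n::finite \<Rightarrow> real^'n"
  assumes "CARD('n) = 2" and maps: "\<forall>x\<in>beliefs. \<phi> x \<in> beliefs" and ray: "distorts_along_rays \<phi>"
  shows "\<exists>a b. 0 \<le> a \<and> a \<le> b \<and> b \<le> 1 \<and>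
           (\<forall>x\<in>beliefs.
              (x $ s < a \<longrightarrow> \<phi> x $ s = a) \<and>
              (a \<le> x $ s \<and> x $ s \<le> b \<longrightarrow> \<phi> x = x) \<and>
              (b < x $ s \<longrightarrow> \<phi> x $ s = b))"
proof -
  obtain s' where "s' \<noteq> s"
    using assms(1) by (rule UNIV_two_states)
  define v0 :: "real^'n" where "v0 = axis s' 1"
  define v1 :: "real^'n" where "v1 = axis s 1"
  have v: "v0 \<in> beliefs" "v1 \<in> beliefs" "v0 $ s = 0" "v1 $ s = 1"
    using \<open>s' \<noteq> s\<close> by (simp_all add: v0_def v1_def axis_in_beliefs) (simp_all add: axis_def)
  have bounds: "0 \<le> \<phi> v0 $ s" "\<phi> v1 $ s \<le> 1"
    using maps v(1,2) beliefs_nonneg beliefs_le_one by blast+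
  have "\<phi> v0 $ s \<le> \<phi> v1 $ s"
  proof (cases "v0 $ s < \<phi> v0 $ s")
    case True
    then show ?thesis
      using distorts_along_rays_coordinate_mono(1)[OF ray v(1,2)] by blast
  next
    case False
    then show ?thesis
      using v(3) maps v(2) beliefs_nonneg[of "\<phi> v1" s] by force
  qed
  moreover have "\<phi> x = x" if "x \<in> beliefs" "\<phi> v0 $ s \<le> x $ s" "x $ s \<le> \<phi> v1 $ s" for x
    using distorts_along_rays_coordinate_between[OF ray v(1,2) that] maps that(1)
      beliefs_eq_two_states[OF assms(1)] by blast
  moreover have "\<phi> x $ s = \<phi> v0 $ s" if "x \<in> beliefs" "x $ s < \<phi> v0 $ s" for x
    using distorts_along_rays_coordinate_below[OF ray v(1) that(1) _ that(2)] v(3)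
      beliefs_nonneg[OF that(1)] by simp
  moreover have "\<phi> x $ s = \<phi> v1 $ s" if "x \<in> beliefs" "\<phi> v1 $ s < x $ s" for x
    using distorts_along_rays_coordinate_above[OF ray v(2) that(1) _ that(2)] v(4)
      beliefs_le_one[OF that(1)] by simp
  ultimately show ?thesis
    using bounds by blast
qed

theorem mainTheorem14:
  fixes \<mu> :: "real^'n::finite" and \<phi> :: "real^'n \<Rightarrow> real^'n"
  assumes "CARD('n) \<ge> 2"
    and "\<mu> \<in> rel_interior beliefs"
    and "\<forall>x\<in>beliefs. \<phi> x \<in> beliefs"
    and "respects_blackwell \<mu> \<phi>"
    and "continuous_on beliefs \<phi>"
  shows "(CARD('n) \<ge> 3 \<longrightarrow>
            (\<exists>xs\<in>beliefs. \<forall>x\<in>beliefs. \<phi> x = xs) \<or> (\<forall>x\<in>beliefs. \<phi> x = x))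
       \<and> (CARD('n) = 2 \<longrightarrow> (\<forall>s::'n. \<exists>a b. 0 \<le> a \<and> a \<le> b \<and> b \<le> 1 \<and>
            (\<forall>x\<in>beliefs.
               (x $ s < a \<longrightarrow> \<phi> x $ s = a) \<and>
               (a \<le> x $ s \<and> x $ s \<le> b \<longrightarrow> \<phi> x = x) \<and>
               (b < x $ s \<longrightarrow> \<phi> x $ s = b))))"
proof -
  have "convex_on beliefs (welfare \<phi> (\<lambda>a \<theta>. a $ \<theta>) (bet_on g))" for g
    using assms(4,2) decision_problem_bet_on by (rule convex_on_welfare)
  then have "distorts_along_rays \<phi>"
    using assms(5,3) by (rule distorts_along_rays_if_convex_bet_welfare)
  then show ?thesis
    using distorts_along_rays_constant_or_id[OF _ assms(3)] distorts_along_rays_two_states[OF _ assms(3)]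
    by blast
qed

end
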